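(* Let $q$ be a power of $2$. In $\mathrm{AG}(3,q^2)$ with affine coordinates $x,y,z$ and plane at infinity $\Sigma_\infty$, let $\mathcal H$ be the Hermitian surface $z^q+z=x^{q+1}+y^{q+1}$ and let $\mathcal Q$ be a hyperbolic quadric with affine equation $z=ax^2+by^2+cxy+dx+ey+f$, $a,\dots,f\in\mathrm{GF}(q^2)$, such that $\mathcal C_\infty=\mathcal Q\cap\mathcal H\cap\Sigma_\infty$ is the union of two lines. Let $\Xi_\infty$ be the quadric of $\mathrm{PG}(3,q)$ defined below. If $\Xi_\infty$ has rank $2$, then $\Xi_\infty$ is the union of two planes $\Pi_1\cup\Pi_2$ both defined over $\mathrm{GF}(q)$.
   Context: Fix $\nu\in\mathrm{GF}(q)\setminus\{1\}$ with absolute trace $\mathrm{Tr}_q(\nu)=\nu+\nu^2+\dots+\nu^{q/2}=1$, and $\varepsilon\in\mathrm{GF}(q^2)\setminus\mathrm{GF}(q)$ with $\varepsilon^2+\varepsilon+\nu=0$. Write each $t\in\mathrm{GF}(q^2)$ as $t=t_0+t_1\varepsilon$ with $t_0,t_1\in\mathrm{GF}(q)$ (so $a=a_0+a_1\varepsilon$, $b=b_0+b_1\varepsilon$, $c=c_0+c_1\varepsilon$, etc.). $\Xi_\infty$ is the quadric of $\mathrm{PG}(3,q)$ in coordinates $(x_0,x_1,y_0,y_1)$ with equation $(a_1+1)x_0^2+x_0x_1+[a_0+(1+\nu)a_1+\nu]x_1^2+(b_1+1)y_0^2+y_0y_1+[b_0+(1+\nu)b_1+\nu]y_1^2+c_1x_0y_0+(c_0+c_1)x_0y_1+(c_0+c_1)x_1y_0+[c_0+(1+\nu)c_1]x_1y_1=0.$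 The rank of a quadric is the minimum number of indeterminates appearing in an equation for it under projective changes of coordinates. *)

theory Defs
  imports Main
begin

text \<open>Points of PG(3,F) are represented by nonzero homogeneous coordinate vectors
  in F^4, written as 4-tuples.\<close>

type_synonym 'a vec4 = "'a \<times> 'a \<times> 'a \<times> 'a"

definition vadd :: "'a::field vec4 \<Rightarrow> 'a vec4 \<Rightarrow> 'a vec4" where
  "vadd u v = (case u of (u1,u2,u3,u4) \<Rightarrow> case v of (v1,v2,v3,v4) \<Rightarrow>
      (u1+v1, u2+v2, u3+v3, u4+v4))"

definition vsmult :: "'a::field \<Rightarrow> 'a vec4 \<Rightarrow> 'a vec4" where
  "vsmult c u = (case u of (u1,u2,u3,u4) \<Rightarrow> (c*u1, c*u2, c*u3, c*u4))"

definition vindep :: "'a::field vec4 \<Rightarrow> 'a vec4 \<Rightarrow> bool" where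
  "vindep u w \<longleftrightarrow> (\<forall>r s. vadd (vsmult r u) (vsmult s w) = (0,0,0,0) \<longrightarrow> r = 0 \<and> s = 0)"

text \<open>The 2-dimensional subspace spanned by u, w (a line of PG(3,F) when u, w are independent).\<close>
definition vspan2 :: "'a::field vec4 \<Rightarrow> 'a vec4 \<Rightarrow> 'a vec4 set" where
  "vspan2 u w = {vadd (vsmult r u) (vsmult s w) | r s. True}"

definition union_two_lines :: "'a::field vec4 set \<Rightarrow> bool" where
  "union_two_lines S \<longleftrightarrow> (\<exists>u1 w1 u2 w2. vindep u1 w1 \<and> vindep u2 w2 \<and>
       vspan2 u1 w1 \<noteq> vspan2 u2 w2 \<and>
       S = (vspan2 u1 w1 \<union> vspan2 u2 w2) - {(0,0,0,0)})"

definition polar :: "('a::field vec4 \<Rightarrow> 'a) \<Rightarrow> 'a vec4 \<Rightarrow> 'a vec4 \<Rightarrow> 'a" where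
  "polar Q u v = Q (vadd u v) - Q u - Q v"

definition nonsingular_quadric :: "('a::field vec4 \<Rightarrow> 'a) \<Rightarrow> bool" where
  "nonsingular_quadric Q \<longleftrightarrow>
     \<not> (\<exists>v. v \<noteq> (0,0,0,0) \<and> Q v = 0 \<and> (\<forall>w. polar Q v w = 0))"

definition hyperbolic_quadric :: "('a::field vec4 \<Rightarrow> 'a) \<Rightarrow> bool" where
  "hyperbolic_quadric Q \<longleftrightarrow> nonsingular_quadric Q \<and>
     (\<exists>u w. vindep u w \<and> (\<forall>v\<in>vspan2 u w. Q v = 0))"

text \<open>Quadratic forms in 4 indeterminates X_0..X_3 given by their coefficients:
  C i j (for i \<le> j < 4) is the coefficient of X_i X_j.\<close>
type_synonym 'a qcoeffs = "nat \<Rightarrow> nat \<Rightarrow> 'a"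

text \<open>Coefficients of the form obtained by the linear substitution X_i = sum_k M i k * Y_k.\<close>
definition qsubst :: "'a::comm_ring_1 qcoeffs \<Rightarrow> (nat \<Rightarrow> nat \<Rightarrow> 'a) \<Rightarrow> 'a qcoeffs" where
  "qsubst C M k l =
     (if k = l then (\<Sum>i<4. \<Sum>j\<in>{i..<4}. C i j * M i k * M j k)
      else (\<Sum>i<4. \<Sum>j\<in>{i..<4}. C i j * (M i k * M j l + M i l * M j k)))"

definition var_appears :: "'a::zero qcoeffs \<Rightarrow> nat \<Rightarrow> bool" where
  "var_appears C k \<longleftrightarrow> (\<exists>l<4. C (min k l) (max k l) \<noteq> 0)"

definition invertible_over :: "'a::field set \<Rightarrow> (nat \<Rightarrow> nat \<Rightarrow> 'a) \<Rightarrow> bool" where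
  "invertible_over K M \<longleftrightarrow> (\<forall>i<4. \<forall>j<4. M i j \<in> K) \<and>
     (\<exists>N. (\<forall>i<4. \<forall>j<4. N i j \<in> K) \<and>
          (\<forall>i<4. \<forall>j<4. (\<Sum>k<4. M i k * N k j) = (if i = j then 1 else 0)))"

text \<open>Rank of a quadric of PG(3,K): minimum number of indeterminates appearing in an
  equation for it under projective changes of coordinates (over K).\<close>
definition qrank :: "'a::field set \<Rightarrow> 'a qcoeffs \<Rightarrow> nat" where
  "qrank K C = (LEAST n. \<exists>M. invertible_over K M \<and>
                    card {k. k < 4 \<and> var_appears (qsubst C M) k} = n)"

text \<open>The quadric is the union of two planes defined over K: its quadratic form is the
  product of two linear forms with coefficients in K.\<close>
definition two_planes_over :: "'a::field set \<Rightarrow> 'a qcoeffs \<Rightarrow> bool" where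
  "two_planes_over K C \<longleftrightarrow> (\<exists>l m. (\<forall>i<4. l i \<in> K \<and> m i \<in> K) \<and>
     (\<forall>i<4. \<forall>j<4. i \<le> j \<longrightarrow>
        C i j = (if i = j then l i * m i else l i * m j + l j * m i)))"

definition subGF :: "nat \<Rightarrow> 'a::field set" where
  "subGF q = {u. u ^ q = u}"

text \<open>The quadric Xi_infinity, coordinates (x0,x1,y0,y1) = indices 0,1,2,3.\<close>
definition Xi_inf :: "'a::field \<Rightarrow> 'a \<Rightarrow> 'a \<Rightarrow> 'a \<Rightarrow> 'a \<Rightarrow> 'a \<Rightarrow> 'a \<Rightarrow> 'a qcoeffs" where
  "Xi_inf \<nu> a0 a1 b0 b1 c0 c1 i j =
    (if (i,j) = (0,0) then a1 + 1
     else if (i,j) = (0,1) then 1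
     else if (i,j) = (1,1) then a0 + (1+\<nu>)*a1 + \<nu>
     else if (i,j) = (2,2) then b1 + 1
     else if (i,j) = (2,3) then 1
     else if (i,j) = (3,3) then b0 + (1+\<nu>)*b1 + \<nu>
     else if (i,j) = (0,2) then c1
     else if (i,j) = (0,3) then c0 + c1
     else if (i,j) = (1,2) then c0 + c1
     else if (i,j) = (1,3) then c0 + (1+\<nu>)*c1
     else 0)"

end

theory Submission
  imports Defs
begin

text \<open>Identify GF(q^2) with GF(q)^2 through t = t0 + t1 * \<epsilon>. In these coordinates the
  equation of Xi_\<infinity> is Tr(Q(x, y)) + N(x) + N(y), where Q(x, y) = a x^2 + b y^2 + c x y is the
  quadratic part of the equation of the quadric, N(t) = t^(q+1) and Tr(t) = t + t^q. The two lines
  of C_\<infinity> come from two independent zeros (x_i, y_i) of both Q and N(x) + N(y), so Xi_\<infinity>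
  vanishes on the two GF(q)-subspaces {\<lambda> (x_i, y_i)}, which together span GF(q)^4. A quadric of
  rank 2 is a binary form g(L1, L2) in two linear forms over GF(q). If g had no nontrivial zero over
  GF(q), the GF(q)-zeros of Xi_\<infinity> would form the subspace L1 = L2 = 0, which is closed under
  addition, so Xi_\<infinity> would vanish identically, contradicting the coefficient 1 of x0 x1. Hence g
  has a GF(q)-rational zero and splits into two linear factors over GF(q).\<close>

lemma of_nat_card_UNIV_eq_0: "of_nat (card (UNIV :: 'a::{ring_1,finite} set)) = (0::'a)"
proof -
  have "(\<Sum>y\<in>UNIV. y + 1) = (\<Sum>y\<in>(UNIV::'a set). y)"
    by (rule sum.reindex_bij_witness[of _ "\<lambda>y. y - 1" "\<lambda>y. y + 1"]) auto
  then show ?thesis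
    by (simp add: sum.distrib)
qed

lemma two_eq_0_if_card_UNIV_eq_power_two:
  assumes "card (UNIV :: 'a::{idom,finite} set) = 2 ^ n" and "n > 0"
  shows "(2::'a) = 0"
  using of_nat_card_UNIV_eq_0[where 'a='a] assms by simp

text \<open>The library version finite_field_power_card_eq_same needs the sort finite_field.\<close>
lemma power_card_UNIV_eq_self: "x ^ card (UNIV :: 'a set) = (x::'a::{field,finite})"
proof (cases "x = 0")
  case True
  then show ?thesis
    using finite_UNIV_card_ge_0[where 'a='a] by simp
next
  case False
  let ?U = "UNIV - {0::'a}"
  have "(\<Prod>y\<in>?U. x * y) = (\<Prod>y\<in>?U. y)"
    by (rule prod.reindex_bij_witness[of _ "\<lambda>y. y / x" "\<lambda>y. x * y"]) (use False in auto)
  then have "x ^ card ?U * (\<Prod>y\<in>?U. y) = 1 * (\<Prod>y\<in>?U. y)"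
    by (simp add: prod.distrib)
  then have "x ^ card ?U = 1"
    by (subst (asm) mult_cancel_right) simp
  moreover have "card (UNIV :: 'a set) = Suc (card ?U)"
    using finite_UNIV_card_ge_0[where 'a='a] by (simp add: card_Diff_singleton)
  ultimately show ?thesis
    by (metis power_Suc2 mult_1)
qed

lemma uminus_eq_self_char2: "(2::'a::ring_1) = 0 \<Longrightarrow> - x = (x::'a)"
  by (metis add_eq_0_iff2 mult_2 mult_zero_left)

lemma add_self_char2: "(2::'a::ring_1) = 0 \<Longrightarrow> x + x = (0::'a)"
  by (metis mult_2 mult_zero_left)

lemma add_power_two_power_char2:
  assumes "(2::'a::comm_ring_1) = 0"
  shows "(x + y) ^ 2 ^ k = x ^ 2 ^ k + (y::'a) ^ 2 ^ k"
proof (induction k)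
  case (Suc k)
  have "(x + y) ^ 2 ^ Suc k = ((x + y) ^ 2 ^ k)\<^sup>2"
    by (simp add: power_mult[symmetric] mult.commute)
  also have "\<dots> = (x ^ 2 ^ k)\<^sup>2 + (y ^ 2 ^ k)\<^sup>2"
    using assms by (simp add: Suc power2_eq_square algebra_simps)
  also have "\<dots> = x ^ 2 ^ Suc k + y ^ 2 ^ Suc k"
    by (simp add: power_mult[symmetric] mult.commute)
  finally show ?case .
qed simp

lemma cramer2:
  fixes x1 y1 x2 y2 X Y :: "'a::field"
  assumes "x1 * y2 - x2 * y1 \<noteq> 0"
  obtains l m where "l * x1 + m * x2 = X" and "l * y1 + m * y2 = Y"
proof
  let ?D = "x1 * y2 - x2 * y1"
  have "(X * y2 - x2 * Y) * x1 + (x1 * Y - X * y1) * x2 = X * ?D"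
       "(X * y2 - x2 * Y) * y1 + (x1 * Y - X * y1) * y2 = Y * ?D"
    by algebra+
  with assms show "(X * y2 - x2 * Y) / ?D * x1 + (x1 * Y - X * y1) / ?D * x2 = X"
    and "(X * y2 - x2 * Y) / ?D * y1 + (x1 * Y - X * y1) / ?D * y2 = Y"
    by (simp_all add: divide_simps)
qed

section \<open>Quadratic forms in four variables\<close>

definition qeval :: "'a::comm_ring_1 qcoeffs \<Rightarrow> (nat \<Rightarrow> 'a) \<Rightarrow> 'a" where
  "qeval C v = (\<Sum>i<4. \<Sum>j\<in>{i..<4}. C i j * v i * v j)"

definition linform :: "(nat \<Rightarrow> 'a::comm_ring_1) \<Rightarrow> (nat \<Rightarrow> 'a) \<Rightarrow> 'a" where
  "linform L v = (\<Sum>i<4. L i * v i)"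

lemma qeval_expand: "qeval C v =
   C 0 0 * v 0 * v 0 + C 0 1 * v 0 * v 1 + C 0 2 * v 0 * v 2 + C 0 3 * v 0 * v 3
 + C 1 1 * v 1 * v 1 + C 1 2 * v 1 * v 2 + C 1 3 * v 1 * v 3
 + C 2 2 * v 2 * v 2 + C 2 3 * v 2 * v 3 + C 3 3 * v 3 * v 3"
  by (simp add: qeval_def numeral_eq_Suc lessThan_Suc atLeastLessThanSuc algebra_simps)

lemma qeval_cong: "(\<And>i. i < 4 \<Longrightarrow> v i = w i) \<Longrightarrow> qeval C v = qeval C w"
  by (simp add: qeval_expand)

lemma qeval_qsubst: "qeval C (\<lambda>i. \<Sum>k<4. M i k * y k) = qeval (qsubst C M) y"
  unfolding qeval_expand qsubst_def
  by (simp add: numeral_eq_Suc lessThan_Suc atLeastLessThanSuc algebra_simps)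

lemma qeval_eq_appearing_vars: "qeval C v = qeval C (\<lambda>i. if var_appears C i then v i else 0)"
proof -
  have "C i j = 0" if ij: "i \<le> j" "j < 4" and "\<not> var_appears C i \<or> \<not> var_appears C j" for i j
  proof -
    have "i < 4"
      using ij by simp
    then have "C (min i j) (max i j) = 0 \<or> C (min j i) (max j i) = 0"
      using that unfolding var_appears_def by blast
    moreover have "min i j = i" "max i j = j" "min j i = i" "max j i = j"
      using ij by auto
    ultimately show ?thesis
      by auto
  qed
  then show ?thesis
    unfolding qeval_def by (intro sum.cong refl) auto
qed

lemma qeval_two_vars:
  assumes "a < b" "b < 4"
  shows "qeval C (\<lambda>i. if i = a then s else if i = b then t else 0) =
         C a a * s\<^sup>2 + C a b * s * t + C b b * t\<^sup>2"
proof -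
  have "(a = 0 \<and> b = 1) \<or> (a = 0 \<and> b = 2) \<or> (a = 0 \<and> b = 3) \<or> (a = 1 \<and> b = 2) \<or>
        (a = 1 \<and> b = 3) \<or> (a = 2 \<and> b = 3)"
    using assms by auto
  then show ?thesis
    by (elim disjE conjE) (simp_all add: qeval_expand power2_eq_square)
qed

lemma qeval_unit:
  assumes "i < 4"
  shows "qeval C (\<lambda>k. if k = i then 1 else 0) = C i i"
proof -
  have "i = 0 \<or> i = 1 \<or> i = 2 \<or> i = 3"
    using assms by auto
  then show ?thesis
    by (elim disjE) (simp_all add: qeval_expand)
qed

lemma linform_unit: "i < 4 \<Longrightarrow> linform L (\<lambda>k. if k = i then 1 else 0) = L i"
  by (simp add: linform_def if_distrib cong: if_cong)

lemma linform_two_units: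
  assumes "i < j" "j < 4"
  shows "linform L (\<lambda>k. if k = i then 1 else if k = j then 1 else 0) = L i + L j"
proof -
  have "linform L (\<lambda>k. if k = i then 1 else if k = j then 1 else 0) =
        (\<Sum>k<4. L k * (if k = i then 1 else 0) + L k * (if k = j then 1 else 0))"
    unfolding linform_def using assms by (intro sum.cong) auto
  also have "\<dots> = linform L (\<lambda>k. if k = i then 1 else 0) + linform L (\<lambda>k. if k = j then 1 else 0)"
    by (simp add: linform_def sum.distrib)
  also have "\<dots> = L i + L j"
    using assms by (simp add: linform_unit)
  finally show ?thesis .
qed

lemma linform_add: "linform (\<lambda>i. L i + L' i) v = linform L v + linform L' v"
  by (simp add: linform_def sum.distrib distrib_right)

lemma linform_scale: "linform (\<lambda>i. c * L i) v = c * linform L v"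
  by (simp add: linform_def sum_distrib_left mult.assoc)

lemma linform_add_vec: "(\<And>i. i < 4 \<Longrightarrow> v i = u i + w i) \<Longrightarrow> linform L v = linform L u + linform L w"
  by (simp add: linform_def sum.distrib[symmetric] distrib_left)

lemma linform_inverse_matrix:
  assumes "\<forall>i<4. \<forall>j<4. (\<Sum>k<4. M i k * N k j) = (if i = j then 1 else 0)"
    and "i < 4"
  shows "(\<Sum>k<4. M i k * linform (N k) v) = v i"
proof -
  have "(\<Sum>k<4. M i k * linform (N k) v) = (\<Sum>k<4. \<Sum>j<4. M i k * N k j * v j)"
    unfolding linform_def by (simp add: sum_distrib_left mult.assoc)
  also have "\<dots> = (\<Sum>j<4. (\<Sum>k<4. M i k * N k j) * v j)"
    by (subst sum.swap) (simp add: sum_distrib_right)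
  also have "\<dots> = (\<Sum>j<4. if i = j then v j else 0)"
    using assms by (intro sum.cong) auto
  also have "\<dots> = v i"
    using assms(2) by simp
  finally show ?thesis .
qed

lemma qeval_qsubst_inverse:
  assumes "\<forall>i<4. \<forall>j<4. (\<Sum>k<4. M i k * N k j) = (if i = j then 1 else 0)"
  shows "qeval C v = qeval (qsubst C M) (\<lambda>k. linform (N k) v)"
proof -
  have "qeval C v = qeval C (\<lambda>i. \<Sum>k<4. M i k * linform (N k) v)"
    using linform_inverse_matrix[OF assms] by (intro qeval_cong) simp
  then show ?thesis
    by (simp add: qeval_qsubst)
qed

lemma qeval_two_appearing_vars:
  assumes "card {k. k < 4 \<and> var_appears C k} = 2"
  obtains a b where "a < b" "b < 4"
    and "\<And>v. qeval C v = C a a * (v a)\<^sup>2 + C a b * v a * v b + C b b * (v b)\<^sup>2"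
proof -
  obtain x y where xy: "{k. k < 4 \<and> var_appears C k} = {x, y}" "x \<noteq> y"
    using assms unfolding card_2_iff by blast
  define a b where "a = min x y" and "b = max x y"
  have ab: "a < b" "b < 4"
    using xy unfolding a_def b_def by (auto simp: min_def max_def)
  have vars: "var_appears C k \<longleftrightarrow> k = a \<or> k = b" if "k < 4" for k
    using xy(1) that unfolding a_def b_def by (auto simp: set_eq_iff min_def max_def)
  have "qeval C v = C a a * (v a)\<^sup>2 + C a b * v a * v b + C b b * (v b)\<^sup>2" for v
  proof -
    have "qeval C v = qeval C (\<lambda>k. if k = a then v a else if k = b then v b else 0)"
      by (subst qeval_eq_appearing_vars, rule qeval_cong) (auto simp: vars)
    also have "\<dots> = C a a * (v a)\<^sup>2 + C a b * v a * v b + C b b * (v b)\<^sup>2"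
      using ab by (rule qeval_two_vars)
    finally show ?thesis .
  qed
  with ab show ?thesis
    using that by blast
qed

lemma two_planes_overI:
  assumes lm: "\<And>i. i < 4 \<Longrightarrow> l i \<in> K \<and> m i \<in> K"
    and factor: "\<And>v. qeval C v = linform l v * linform m v"
  shows "two_planes_over K C"
proof -
  have diag: "C i i = l i * m i" if "i < 4" for i
    using qeval_unit[OF that, of C] factor by (simp add: linform_unit that)
  have "C i j = l i * m j + l j * m i" if "i < j" "j < 4" for i j
  proof -
    have "C i i * 1\<^sup>2 + C i j * 1 * 1 + C j j * 1\<^sup>2 = (l i + l j) * (m i + m j)"
      using qeval_two_vars[OF that, of C 1 1] factor by (simp add: linform_two_units that)
    then show ?thesis
      using diag that by (simp add: algebra_simps)
  qed
  then show ?thesis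
    unfolding two_planes_over_def using lm diag by (auto simp: le_less)
qed

locale subfield =
  fixes K :: "'a::field set"
  assumes zero_mem [simp]: "0 \<in> K" and one_mem [simp]: "1 \<in> K"
    and add_mem [simp]: "x \<in> K \<Longrightarrow> y \<in> K \<Longrightarrow> x + y \<in> K"
    and uminus_mem [simp]: "x \<in> K \<Longrightarrow> - x \<in> K"
    and mult_mem [simp]: "x \<in> K \<Longrightarrow> y \<in> K \<Longrightarrow> x * y \<in> K"
    and inverse_mem [simp]: "x \<in> K \<Longrightarrow> inverse x \<in> K"
begin

lemma divide_mem [simp]: "x \<in> K \<Longrightarrow> y \<in> K \<Longrightarrow> x / y \<in> K"
  by (simp add: divide_inverse)

lemma power_mem [simp]: "x \<in> K \<Longrightarrow> x ^ n \<in> K"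
  by (induction n) simp_all

lemma sum_mem: "(\<And>i. i \<in> A \<Longrightarrow> f i \<in> K) \<Longrightarrow> sum f A \<in> K"
  by (induction A rule: infinite_finite_induct) auto

lemma linform_mem: "(\<And>i. i < 4 \<Longrightarrow> L i \<in> K) \<Longrightarrow> (\<And>i. i < 4 \<Longrightarrow> v i \<in> K) \<Longrightarrow> linform L v \<in> K"
  unfolding linform_def by (auto intro: sum_mem)

lemma identity_invertible_over: "invertible_over K (\<lambda>i j. if i = j then 1 else 0)"
  unfolding invertible_over_def
  by (intro conjI exI[of _ "\<lambda>i j. if i = j then 1 else 0"]) (auto simp: numeral_eq_Suc lessThan_Suc)

lemma qrank_2_binary_form:
  assumes CK: "\<And>i j. C i j \<in> K" and rank: "qrank K C = 2"
  obtains L1 L2 :: "nat \<Rightarrow> 'a" and \<alpha> \<beta> \<gamma>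
  where "\<And>i. i < 4 \<Longrightarrow> L1 i \<in> K \<and> L2 i \<in> K" and "\<alpha> \<in> K" "\<beta> \<in> K" "\<gamma> \<in> K"
    and "\<And>v. qeval C v = \<alpha> * (linform L1 v)\<^sup>2 + \<beta> * linform L1 v * linform L2 v + \<gamma> * (linform L2 v)\<^sup>2"
proof -
  have "\<exists>M. invertible_over K M \<and> card {k. k < 4 \<and> var_appears (qsubst C M) k} = qrank K C"
    unfolding qrank_def by (rule LeastI_ex) (use identity_invertible_over in blast)
  then obtain M where invM: "invertible_over K M"
    and card2: "card {k. k < 4 \<and> var_appears (qsubst C M) k} = 2"
    using rank by auto
  from invM obtain N where MK: "\<forall>i<4. \<forall>j<4. M i j \<in> K" and NK: "\<forall>i<4. \<forall>j<4. N i j \<in> K"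
    and MN: "\<forall>i<4. \<forall>j<4. (\<Sum>k<4. M i k * N k j) = (if i = j then 1 else 0)"
    unfolding invertible_over_def by blast
  define C' where "C' = qsubst C M"
  obtain a b where ab: "a < b" "b < 4"
    and binary: "\<And>w. qeval C' w = C' a a * (w a)\<^sup>2 + C' a b * w a * w b + C' b b * (w b)\<^sup>2"
    using qeval_two_appearing_vars card2 unfolding C'_def by blast
  have "qeval C v = C' a a * (linform (N a) v)\<^sup>2 + C' a b * linform (N a) v * linform (N b) v
                   + C' b b * (linform (N b) v)\<^sup>2" for v
    using qeval_qsubst_inverse[OF MN, of C v] binary unfolding C'_def by simp
  moreover have "C' i j \<in> K" if "i < 4" "j < 4" for i j
    unfolding C'_def qsubst_def using MK CK that by (auto intro!: sum_mem)
  ultimately show ?thesis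
    using NK ab by (intro that[of "N a" "N b" "C' a a" "C' a b" "C' b b"]) auto
qed

lemma binary_form_factor:
  assumes K: "\<alpha> \<in> K" "\<beta> \<in> K" "\<gamma> \<in> K" "s \<in> K" "t \<in> K" and nontrivial: "s \<noteq> 0 \<or> t \<noteq> 0"
    and zero: "\<alpha> * s\<^sup>2 + \<beta> * s * t + \<gamma> * t\<^sup>2 = 0"
  obtains p1 p2 p3 p4 where "p1 \<in> K" "p2 \<in> K" "p3 \<in> K" "p4 \<in> K"
    and "\<And>S T. \<alpha> * S\<^sup>2 + \<beta> * S * T + \<gamma> * T\<^sup>2 = (p1 * S + p2 * T) * (p3 * S + p4 * T)"
proof (cases "\<alpha> = 0")
  case True
  then show ?thesis
    using that[of 0 1 \<beta> \<gamma>] K by (simp add: algebra_simps power2_eq_square)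
next
  case False
  with zero nontrivial have "t \<noteq> 0"
    by auto
  define r where "r = s / t"
  have "\<alpha> * r\<^sup>2 + \<beta> * r + \<gamma> = (\<alpha> * s\<^sup>2 + \<beta> * s * t + \<gamma> * t\<^sup>2) / t\<^sup>2"
    using \<open>t \<noteq> 0\<close> unfolding r_def by (simp add: field_simps power2_eq_square)
  then have root: "\<alpha> * r\<^sup>2 + \<beta> * r + \<gamma> = 0"
    using zero by simp
  have "\<alpha> * S\<^sup>2 + \<beta> * S * T + \<gamma> * T\<^sup>2 = (1 * S + (- r) * T) * (\<alpha> * S + (\<alpha> * r + \<beta>) * T)" for S T
  proof -
    have "(1 * S + (- r) * T) * (\<alpha> * S + (\<alpha> * r + \<beta>) * T) =
          \<alpha> * S\<^sup>2 + \<beta> * S * T + \<gamma> * T\<^sup>2 - (\<alpha> * r\<^sup>2 + \<beta> * r + \<gamma>) * T\<^sup>2"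
      by algebra
    then show ?thesis
      using root by simp
  qed
  moreover have "r \<in> K"
    using K unfolding r_def by simp
  ultimately show ?thesis
    using that[of 1 "- r" \<alpha> "\<alpha> * r + \<beta>"] K by simp
qed

end

section \<open>Lines of PG(3, F)\<close>

lemma vadd_tuple [simp]: "vadd (u1, u2, u3, u4) (w1, w2, w3, w4) = (u1 + w1, u2 + w2, u3 + w3, u4 + w4)"
  by (simp add: vadd_def)

lemma vsmult_tuple [simp]: "vsmult r (u1, u2, u3, u4) = (r * u1, r * u2, r * u3, r * u4)"
  by (simp add: vsmult_def)

lemma vspan2_mem: "vadd (vsmult r u) (vsmult s w) \<in> vspan2 u w"
  unfolding vspan2_def by blast

lemma vspan2_zero_mem: "(0, 0, 0, 0) \<in> vspan2 u (w :: 'a::field vec4)"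
  using vspan2_mem[of 0 u 0 w] by (cases u; cases w) simp

lemma vspan2_left_mem: "u \<in> vspan2 u (w :: 'a::field vec4)"
  using vspan2_mem[of 1 u 0 w] by (cases u; cases w) simp

lemma vspan2_right_mem: "w \<in> vspan2 u (w :: 'a::field vec4)"
  using vspan2_mem[of 0 u 1 w] by (cases u; cases w) simp

lemma vspan2_eq_if_subset:
  fixes u w p q :: "'a::field vec4"
  assumes indep: "vindep u w" and sub: "vspan2 u w \<subseteq> vspan2 p q"
  shows "vspan2 u w = vspan2 p q"
proof
  obtain a b where u: "u = vadd (vsmult a p) (vsmult b q)"
    using sub vspan2_left_mem unfolding vspan2_def by blast
  obtain c d where w: "w = vadd (vsmult c p) (vsmult d q)"
    using sub vspan2_right_mem unfolding vspan2_def by blast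
  have comb: "vadd (vsmult l u) (vsmult m w) = vadd (vsmult (l * a + m * c) p) (vsmult (l * b + m * d) q)"
    for l m
    unfolding u w by (cases p; cases q) (simp add: algebra_simps)
  have "a * d - c * b \<noteq> 0"
  proof
    assume det: "a * d - c * b = 0"
    have "vadd (vsmult 0 p) (vsmult 0 q) = (0, 0, 0, 0)"
      by (cases p; cases q) simp
    then have "vadd (vsmult d u) (vsmult (- b) w) = (0, 0, 0, 0)"
      and "vadd (vsmult (- c) u) (vsmult a w) = (0, 0, 0, 0)"
      using det by (simp_all add: comb algebra_simps)
    then have "d = 0 \<and> - b = 0" and "- c = 0 \<and> a = 0"
      using indep unfolding vindep_def by blast+
    then have "vadd (vsmult 1 u) (vsmult 0 w) = (0, 0, 0, 0)"
      by (cases p; cases q) (simp add: comb)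
    then show False
      using indep unfolding vindep_def by (metis one_neq_zero)
  qed
  show "vspan2 p q \<subseteq> vspan2 u w"
  proof
    fix x
    assume "x \<in> vspan2 p q"
    then obtain r s where x: "x = vadd (vsmult r p) (vsmult s q)"
      unfolding vspan2_def by blast
    obtain l m where "l * a + m * c = r" and "l * b + m * d = s"
      using cramer2[OF \<open>a * d - c * b \<noteq> 0\<close>] .
    then show "x \<in> vspan2 u w"
      using vspan2_mem[of l u m w] by (simp add: comb x)
  qed
qed (fact sub)

text \<open>Otherwise all points of the set lie on the line through (0, 0, 1, 0) and one (x0, y0, 0, 0).\<close>
lemma union_two_lines_at_infinity_independent_points:
  fixes F :: "'a::field \<Rightarrow> 'a \<Rightarrow> bool"
  assumes "union_two_lines {(x, y, z, t). (x, y, z, t) \<noteq> (0, 0, 0, 0) \<and> t = 0 \<and> F x y}"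
  shows "\<exists>x1 y1 x2 y2. F x1 y1 \<and> F x2 y2 \<and> x1 * y2 - x2 * y1 \<noteq> 0"
proof (rule ccontr)
  assume "\<nexists>x1 y1 x2 y2. F x1 y1 \<and> F x2 y2 \<and> x1 * y2 - x2 * y1 \<noteq> 0"
  then have proportional: "x1 * y2 - x2 * y1 = 0" if "F x1 y1" "F x2 y2" for x1 y1 x2 y2
    using that by blast
  define S :: "'a vec4 set" where "S = {(x, y, z, t). (x, y, z, t) \<noteq> (0, 0, 0, 0) \<and> t = 0 \<and> F x y}"
  obtain u1 w1 u2 w2 where indep: "vindep u1 w1" "vindep u2 w2"
    and distinct: "vspan2 u1 w1 \<noteq> vspan2 u2 w2"
    and lines: "S = (vspan2 u1 w1 \<union> vspan2 u2 w2) - {(0, 0, 0, 0)}"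
    using assms unfolding union_two_lines_def S_def[symmetric] by blast
  obtain x0 y0 where nonzero: "x0 \<noteq> 0 \<or> y0 \<noteq> 0" and on_line: "\<And>x y. F x y \<Longrightarrow> x * y0 - x0 * y = 0"
  proof (cases "\<exists>x y. F x y \<and> (x \<noteq> 0 \<or> y \<noteq> 0)")
    case True
    then show ?thesis
      using that proportional by blast
  next
    case False
    then show ?thesis
      using that[of 1 0] by auto
  qed
  define P where "P = vspan2 (x0, y0, 0, 0) (0, 0, 1, 0)"
  have on_P: "(x, y, z, 0) \<in> P" if "F x y" for x y z
  proof -
    obtain r where "r * x0 = x" and "r * y0 = y"
    proof (cases "x0 = 0")
      case True
      then show ?thesis
        using that[of "y / y0"] nonzero on_line[OF \<open>F x y\<close>] by simp
    next
      case False
      then show ?thesis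
        using that[of "x / x0"] on_line[OF \<open>F x y\<close>] by (simp add: field_simps)
    qed
    then show ?thesis
      using vspan2_mem[of r "(x0, y0, 0, 0)" z "(0, 0, 1, 0)"] unfolding P_def by simp
  qed
  then have "S \<subseteq> P"
    unfolding S_def by auto
  moreover have "(0, 0, 0, 0) \<in> P"
    unfolding P_def by (rule vspan2_zero_mem)
  ultimately have "vspan2 u1 w1 \<union> vspan2 u2 w2 \<subseteq> P"
    using lines by blast
  then have "vspan2 u1 w1 = P" and "vspan2 u2 w2 = P"
    using vspan2_eq_if_subset indep unfolding P_def by blast+
  with distinct show False
    by simp
qed

section \<open>GF(q^2) as a plane over GF(q)\<close>

locale gf_char2_quadratic =
  fixes q h :: nat and \<nu> \<epsilon> :: "'a::{field,finite}"
  assumes q_def: "q = 2 ^ h" and h_pos: "h \<ge> 1"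
    and card_UNIV: "card (UNIV :: 'a set) = q ^ 2"
    and nu_mem: "\<nu> \<in> subGF q"
    and eps_not_mem: "\<epsilon> \<notin> subGF q" and eps_root: "\<epsilon>\<^sup>2 + \<epsilon> + \<nu> = 0"
begin

abbreviation K :: "'a set" where "K \<equiv> subGF q"

lemma q_pos: "q > 0"
  using q_def by simp

lemma char2 [simp]: "(2::'a) = 0"
  using two_eq_0_if_card_UNIV_eq_power_two[of "2 * h"] card_UNIV q_def h_pos
  by (simp add: power_mult[symmetric] mult.commute)

lemma uminus_eq_self [simp]: "- x = (x::'a)"
  using uminus_eq_self_char2[OF char2] .

lemma add_self [simp]: "x + x = (0::'a)"
  using add_self_char2[OF char2] .

lemma power_q_add: "(x + y) ^ q = x ^ q + (y::'a) ^ q"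
  unfolding q_def by (rule add_power_two_power_char2[OF char2])

lemma power_q_q: "(x ^ q) ^ q = (x::'a)"
  using power_card_UNIV_eq_self[of x] card_UNIV by (simp add: power_mult[symmetric] power2_eq_square)

lemma mem_K_iff: "x \<in> K \<longleftrightarrow> x ^ q = x"
  by (simp add: subGF_def)

sublocale subfield K
proof
  show "0 \<in> K"
    using q_pos by (simp add: mem_K_iff)
qed (simp_all add: mem_K_iff power_q_add power_mult_distrib power_inverse)

lemma eps_square: "\<epsilon>\<^sup>2 = \<epsilon> + \<nu>"
  using eps_root by (simp only: add.assoc add_eq_0_iff2 uminus_eq_self)

text \<open>\<epsilon>^q is a root of X^2 + X + \<nu> other than \<epsilon>.\<close>
lemma eps_power_q: "\<epsilon> ^ q = \<epsilon> + 1"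
proof -
  have "(\<epsilon> ^ q)\<^sup>2 + \<epsilon> ^ q + \<nu> = (\<epsilon>\<^sup>2 + \<epsilon> + \<nu>) ^ q"
    using nu_mem by (simp add: power_q_add mem_K_iff power_mult[symmetric] mult.commute)
  then have "(\<epsilon> ^ q)\<^sup>2 + \<epsilon> ^ q + \<nu> = 0"
    using eps_root q_def by simp
  moreover have "(\<epsilon> ^ q + \<epsilon>) * (\<epsilon> ^ q + \<epsilon> + 1) =
      ((\<epsilon> ^ q)\<^sup>2 + \<epsilon> ^ q + \<nu>) + (\<epsilon>\<^sup>2 + \<epsilon> + \<nu>) + 2 * (\<epsilon> ^ q * \<epsilon> - \<nu>)"
    by algebra
  ultimately have "(\<epsilon> ^ q + \<epsilon>) * (\<epsilon> ^ q + \<epsilon> + 1) = 0"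
    using eps_root by simp
  moreover have "\<epsilon> ^ q + \<epsilon> \<noteq> 0"
    using eps_not_mem by (simp add: add_eq_0_iff2 mem_K_iff)
  ultimately have "\<epsilon> ^ q + (\<epsilon> + 1) = 0"
    by (simp add: add.assoc)
  then show ?thesis
    by (simp only: add_eq_0_iff2 uminus_eq_self)
qed

text \<open>The \<epsilon>-coordinate of t over K is its trace, as tr \<epsilon> = 1.\<close>
definition tr :: "'a \<Rightarrow> 'a" where "tr t = t + t ^ q"

definition coord0 :: "'a \<Rightarrow> 'a" where "coord0 t = t + tr t * \<epsilon>"

lemma tr_mem: "tr t \<in> K"
  by (simp add: mem_K_iff tr_def power_q_add power_q_q add.commute)

lemma coord0_mem: "coord0 t \<in> K"
proof -
  have "(coord0 t) ^ q = t ^ q + (t ^ q + t) * (\<epsilon> + 1)"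
    by (simp add: coord0_def tr_def power_q_add power_mult_distrib power_q_q eps_power_q)
  also have "\<dots> = coord0 t + 2 * t ^ q"
    unfolding coord0_def tr_def by algebra
  finally show ?thesis
    by (simp add: mem_K_iff)
qed

lemma coord_decomp: "coord0 t + tr t * \<epsilon> = t"
  by (simp add: coord0_def add.assoc)

lemma tr_coords: "u0 \<in> K \<Longrightarrow> u1 \<in> K \<Longrightarrow> tr (u0 + u1 * \<epsilon>) = u1"
  by (simp add: tr_def mem_K_iff power_q_add power_mult_distrib eps_power_q algebra_simps)

lemma coord0_coords: "u0 \<in> K \<Longrightarrow> u1 \<in> K \<Longrightarrow> coord0 (u0 + u1 * \<epsilon>) = u0"
  by (simp add: coord0_def tr_coords add.assoc)

lemma tr_add: "tr (s + t) = tr s + tr t"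
  by (simp add: tr_def power_q_add algebra_simps)

lemma coord0_add: "coord0 (s + t) = coord0 s + coord0 t"
  by (simp add: coord0_def tr_add algebra_simps)

lemma mult_coords:
  "(u0 + u1 * \<epsilon>) * (s0 + s1 * \<epsilon>) = (u0 * s0 + \<nu> * u1 * s1) + (u0 * s1 + u1 * s0 + u1 * s1) * \<epsilon>"
  using eps_square by algebra

lemma tr_mult_coords:
  assumes "u0 \<in> K" "u1 \<in> K" "s0 \<in> K" "s1 \<in> K"
  shows "tr ((u0 + u1 * \<epsilon>) * (s0 + s1 * \<epsilon>)) = u0 * s1 + u1 * s0 + u1 * s1"
  using assms nu_mem by (simp add: mult_coords tr_coords)

lemma square_coords: "(x0 + x1 * \<epsilon>)\<^sup>2 = (x0\<^sup>2 + \<nu> * x1\<^sup>2) + x1\<^sup>2 * \<epsilon>"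
proof -
  have "(x0 + x1 * \<epsilon>)\<^sup>2 = (x0\<^sup>2 + \<nu> * x1\<^sup>2) + x1\<^sup>2 * \<epsilon> + 2 * (x0 * x1 * \<epsilon>)"
    using eps_square by algebra
  then show ?thesis
    by simp
qed

lemma norm_coords:
  assumes "x0 \<in> K" "x1 \<in> K"
  shows "(x0 + x1 * \<epsilon>) ^ (q + 1) = x0\<^sup>2 + x0 * x1 + \<nu> * x1\<^sup>2"
proof -
  have "(x0 + x1 * \<epsilon>) ^ (q + 1) = (x0 + x1 * (\<epsilon> + 1)) * (x0 + x1 * \<epsilon>)"
    using assms by (simp add: mem_K_iff power_q_add power_mult_distrib eps_power_q)
  also have "\<dots> = x0\<^sup>2 + x0 * x1 + \<nu> * x1\<^sup>2 + 2 * (x0 * x1 + x1\<^sup>2) * \<epsilon>"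
    using eps_square by algebra
  finally show ?thesis
    by simp
qed

end

section \<open>The quadric Xi_\<infinity>\<close>

locale Xi_inf_setting = gf_char2_quadratic q h \<nu> \<epsilon> for q h and \<nu> \<epsilon> :: "'a::{field,finite}" +
  fixes a0 a1 b0 b1 c0 c1 :: 'a
  assumes coeffs_mem: "a0 \<in> subGF q" "a1 \<in> subGF q" "b0 \<in> subGF q" "b1 \<in> subGF q"
    "c0 \<in> subGF q" "c1 \<in> subGF q"
begin

abbreviation Xi :: "'a qcoeffs" where "Xi \<equiv> Xi_inf \<nu> a0 a1 b0 b1 c0 c1"

definition Q :: "'a \<Rightarrow> 'a \<Rightarrow> 'a" where
  "Q x y = (a0 + a1 * \<epsilon>) * x\<^sup>2 + (b0 + b1 * \<epsilon>) * y\<^sup>2 + (c0 + c1 * \<epsilon>) * x * y"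

definition coords :: "'a \<Rightarrow> 'a \<Rightarrow> nat \<Rightarrow> 'a" where
  "coords X Y i = (if i = 0 then coord0 X else if i = 1 then tr X else if i = 2 then coord0 Y else tr Y)"

text \<open>This identity is where the equation of Xi comes from.\<close>
lemma qeval_Xi_coords: "qeval Xi (coords X Y) = tr (Q X Y) + X ^ (q + 1) + Y ^ (q + 1)"
proof -
  define x0 x1 y0 y1 where "x0 = coord0 X" and "x1 = tr X" and "y0 = coord0 Y" and "y1 = tr Y"
  have K: "x0 \<in> K" "x1 \<in> K" "y0 \<in> K" "y1 \<in> K" "\<nu> \<in> K"
    unfolding x0_def x1_def y0_def y1_def using coord0_mem tr_mem nu_mem by simp_all
  have X: "X = x0 + x1 * \<epsilon>" and Y: "Y = y0 + y1 * \<epsilon>"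
    unfolding x0_def x1_def y0_def y1_def by (simp_all add: coord_decomp)
  have "Q X Y = (a0 + a1 * \<epsilon>) * ((x0\<^sup>2 + \<nu> * x1\<^sup>2) + x1\<^sup>2 * \<epsilon>)
              + (b0 + b1 * \<epsilon>) * ((y0\<^sup>2 + \<nu> * y1\<^sup>2) + y1\<^sup>2 * \<epsilon>)
              + (c0 + c1 * \<epsilon>) * ((x0 * y0 + \<nu> * x1 * y1) + (x0 * y1 + x1 * y0 + x1 * y1) * \<epsilon>)"
    unfolding Q_def X Y square_coords mult_coords[symmetric] by (simp add: mult.assoc)
  then have tr_Q: "tr (Q X Y) = (a0 * x1\<^sup>2 + a1 * (x0\<^sup>2 + \<nu> * x1\<^sup>2) + a1 * x1\<^sup>2)
                        + (b0 * y1\<^sup>2 + b1 * (y0\<^sup>2 + \<nu> * y1\<^sup>2) + b1 * y1\<^sup>2)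
                        + (c0 * (x0 * y1 + x1 * y0 + x1 * y1) + c1 * (x0 * y0 + \<nu> * x1 * y1)
                           + c1 * (x0 * y1 + x1 * y0 + x1 * y1))"
    using K coeffs_mem by (simp add: tr_add tr_mult_coords)
  have norm_X: "X ^ (q + 1) = x0\<^sup>2 + x0 * x1 + \<nu> * x1\<^sup>2"
    and norm_Y: "Y ^ (q + 1) = y0\<^sup>2 + y0 * y1 + \<nu> * y1\<^sup>2"
    unfolding X Y using K by (simp_all only: norm_coords)
  have Xi_expand: "qeval Xi (coords X Y) =
      (a1 + 1) * x0 * x0 + x0 * x1 + c1 * x0 * y0 + (c0 + c1) * x0 * y1
    + (a0 + (1 + \<nu>) * a1 + \<nu>) * x1 * x1 + (c0 + c1) * x1 * y0 + (c0 + (1 + \<nu>) * c1) * x1 * y1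
    + (b1 + 1) * y0 * y0 + y0 * y1 + (b0 + (1 + \<nu>) * b1 + \<nu>) * y1 * y1"
    unfolding x0_def x1_def y0_def y1_def by (simp add: qeval_expand Xi_inf_def coords_def)
  show ?thesis
    unfolding Xi_expand tr_Q norm_X norm_Y by algebra
qed

lemma qeval_Xi_coords_scaled:
  assumes "Q x y = 0" and "x ^ (q + 1) + y ^ (q + 1) = 0"
  shows "qeval Xi (coords (l * x) (l * y)) = 0"
proof -
  have "Q (l * x) (l * y) = l\<^sup>2 * Q x y"
    unfolding Q_def by algebra
  moreover have "(l * x) ^ (q + 1) + (l * y) ^ (q + 1) = l ^ (q + 1) * (x ^ (q + 1) + y ^ (q + 1))"
    by (simp add: power_mult_distrib algebra_simps)
  moreover have "tr 0 = 0"
    using q_pos by (simp add: tr_def)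
  ultimately show ?thesis
    using assms by (simp add: qeval_Xi_coords add.assoc)
qed

lemma sum_of_two_zeros:
  assumes det: "x1 * y2 - x2 * y1 \<noteq> 0"
    and zero1: "Q x1 y1 = 0" "x1 ^ (q + 1) + y1 ^ (q + 1) = 0"
    and zero2: "Q x2 y2 = 0" "x2 ^ (q + 1) + y2 ^ (q + 1) = 0"
    and v: "\<forall>i<4. v i \<in> K"
  obtains u w where "\<forall>i<4. u i \<in> K \<and> w i \<in> K \<and> v i = u i + w i"
    and "qeval Xi u = 0" and "qeval Xi w = 0"
proof -
  obtain l m where X: "l * x1 + m * x2 = v 0 + v 1 * \<epsilon>" and Y: "l * y1 + m * y2 = v 2 + v 3 * \<epsilon>"
    using cramer2[OF det] .
  let ?u = "coords (l * x1) (l * y1)" and ?w = "coords (m * x2) (m * y2)"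
  have "v i = ?u i + ?w i" if "i < 4" for i
  proof -
    have "i = 0 \<or> i = 1 \<or> i = 2 \<or> i = 3"
      using that by auto
    then have "v i = coords (l * x1 + m * x2) (l * y1 + m * y2) i"
      unfolding X Y coords_def using v by (auto simp: coord0_coords tr_coords)
    then show ?thesis
      by (simp add: coords_def coord0_add tr_add)
  qed
  moreover have "?u i \<in> K" "?w i \<in> K" for i
    by (simp_all add: coords_def coord0_mem tr_mem)
  ultimately show ?thesis
    using that qeval_Xi_coords_scaled zero1 zero2 by blast
qed

lemma Xi_mem: "Xi i j \<in> K"
  using coeffs_mem nu_mem by (simp add: Xi_inf_def)

lemma Xi_nonvanishing: "\<exists>v. (\<forall>i<4. v i \<in> K) \<and> qeval Xi v \<noteq> 0"
proof (rule ccontr)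
  assume "\<nexists>v. (\<forall>i<4. v i \<in> K) \<and> qeval Xi v \<noteq> 0"
  then have vanish: "qeval Xi v = 0" if "\<forall>i<4. v i \<in> K" for v
    using that by blast
  have "Xi 0 0 = 0" "Xi 1 1 = 0"
    using vanish[of "\<lambda>k. if k = 0 then 1 else 0"] vanish[of "\<lambda>k. if k = 1 then 1 else 0"]
    by (simp_all add: qeval_unit)
  moreover have "Xi 0 0 * 1\<^sup>2 + Xi 0 1 * 1 * 1 + Xi 1 1 * 1\<^sup>2 = 0"
    using vanish[of "\<lambda>k. if k = 0 then 1 else if k = 1 then 1 else 0"]
    by (simp add: qeval_two_vars)
  ultimately show False
    by (simp add: Xi_inf_def)
qed

text \<open>Otherwise the zeros of Xi over K would be the common kernel of L1 and L2, which is
  closed under addition.\<close>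
lemma binary_form_isotropic:
  assumes det: "x1 * y2 - x2 * y1 \<noteq> 0"
    and zero1: "Q x1 y1 = 0" "x1 ^ (q + 1) + y1 ^ (q + 1) = 0"
    and zero2: "Q x2 y2 = 0" "x2 ^ (q + 1) + y2 ^ (q + 1) = 0"
    and LK: "\<And>i. i < 4 \<Longrightarrow> L1 i \<in> K \<and> L2 i \<in> K"
    and binary: "\<And>v. qeval Xi v = \<alpha> * (linform L1 v)\<^sup>2 + \<beta> * linform L1 v * linform L2 v
                                  + \<gamma> * (linform L2 v)\<^sup>2"
  shows "\<exists>s t. s \<in> K \<and> t \<in> K \<and> (s \<noteq> 0 \<or> t \<noteq> 0) \<and> \<alpha> * s\<^sup>2 + \<beta> * s * t + \<gamma> * t\<^sup>2 = 0"
proof (rule ccontr)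
  assume anisotropic: "\<nexists>s t. s \<in> K \<and> t \<in> K \<and> (s \<noteq> 0 \<or> t \<noteq> 0) \<and> \<alpha> * s\<^sup>2 + \<beta> * s * t + \<gamma> * t\<^sup>2 = 0"
  have kernel: "linform L1 v = 0 \<and> linform L2 v = 0" if "\<forall>i<4. v i \<in> K" "qeval Xi v = 0" for v
  proof -
    have "linform L1 v \<in> K" "linform L2 v \<in> K"
      using LK that(1) by (auto intro: linform_mem)
    moreover have "\<alpha> * (linform L1 v)\<^sup>2 + \<beta> * linform L1 v * linform L2 v + \<gamma> * (linform L2 v)\<^sup>2 = 0"
      using binary that(2) by simp
    ultimately show ?thesis
      using anisotropic by blast
  qed
  have "qeval Xi v = 0" if vK: "\<forall>i<4. v i \<in> K" for v
  proof -
    obtain u w where uw: "\<forall>i<4. u i \<in> K \<and> w i \<in> K \<and> v i = u i + w i"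
      and "qeval Xi u = 0" "qeval Xi w = 0"
      using sum_of_two_zeros[OF det zero1 zero2 vK] .
    then have "linform L1 u = 0 \<and> linform L2 u = 0" "linform L1 w = 0 \<and> linform L2 w = 0"
      using kernel by blast+
    moreover have "linform L v = linform L u + linform L w" for L
      using uw by (intro linform_add_vec) blast
    ultimately show ?thesis
      by (simp add: binary)
  qed
  with Xi_nonvanishing show False
    by blast
qed

lemma two_planes_over_if_rank_2:
  assumes det: "x1 * y2 - x2 * y1 \<noteq> 0"
    and zero1: "Q x1 y1 = 0" "x1 ^ (q + 1) + y1 ^ (q + 1) = 0"
    and zero2: "Q x2 y2 = 0" "x2 ^ (q + 1) + y2 ^ (q + 1) = 0"
    and rank: "qrank K Xi = 2"
  shows "two_planes_over K Xi"
proof -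
  obtain L1 L2 \<alpha> \<beta> \<gamma> where LK: "\<And>i. i < 4 \<Longrightarrow> L1 i \<in> K \<and> L2 i \<in> K"
    and coeffs: "\<alpha> \<in> K" "\<beta> \<in> K" "\<gamma> \<in> K"
    and binary: "\<And>v. qeval Xi v = \<alpha> * (linform L1 v)\<^sup>2 + \<beta> * linform L1 v * linform L2 v
                                  + \<gamma> * (linform L2 v)\<^sup>2"
    using qrank_2_binary_form[OF Xi_mem rank] by blast
  obtain p1 p2 p3 p4 where pK: "p1 \<in> K" "p2 \<in> K" "p3 \<in> K" "p4 \<in> K"
    and factor: "\<And>S T. \<alpha> * S\<^sup>2 + \<beta> * S * T + \<gamma> * T\<^sup>2 = (p1 * S + p2 * T) * (p3 * S + p4 * T)"
    using binary_form_isotropic[OF det zero1 zero2 LK binary] binary_form_factor[OF coeffs] by blast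
  show ?thesis
  proof (rule two_planes_overI)
    show "(\<lambda>i. p1 * L1 i + p2 * L2 i) i \<in> K \<and> (\<lambda>i. p3 * L1 i + p4 * L2 i) i \<in> K" if "i < 4" for i
      using pK LK[OF that] by simp
    show "qeval Xi v = linform (\<lambda>i. p1 * L1 i + p2 * L2 i) v * linform (\<lambda>i. p3 * L1 i + p4 * L2 i) v" for v
      by (simp add: binary factor linform_add linform_scale)
  qed
qed

end

theorem lemma5:
  fixes q h :: nat
    and \<nu> \<epsilon> a0 a1 b0 b1 c0 c1 d e f :: "'b::{field,finite}"
  assumes q_def: "q = 2 ^ h" and h_pos: "h \<ge> 1"
    and card: "card (UNIV :: 'b set) = q ^ 2"
    and nu_GF: "\<nu> \<in> subGF q" and nu_ne1: "\<nu> \<noteq> 1"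
    and trace: "(\<Sum>i<h. \<nu> ^ (2 ^ i)) = 1"
    and eps_notin: "\<epsilon> \<notin> subGF q" and eps_eq: "\<epsilon>\<^sup>2 + \<epsilon> + \<nu> = 0"
    and coords: "a0 \<in> subGF q" "a1 \<in> subGF q" "b0 \<in> subGF q" "b1 \<in> subGF q"
                "c0 \<in> subGF q" "c1 \<in> subGF q"
    and hyp: "hyperbolic_quadric
       (\<lambda>(x,y,z,t). (a0 + a1*\<epsilon>)*x^2 + (b0 + b1*\<epsilon>)*y^2 + (c0 + c1*\<epsilon>)*x*y
                    + d*x*t + e*y*t + f*t^2 - z*t)"
    and Cinf: "union_two_lines
       {(x,y,z,t). (x,y,z,t) \<noteq> (0,0,0,0) \<and> t = 0
          \<and> (a0 + a1*\<epsilon>)*x^2 + (b0 + b1*\<epsilon>)*y^2 + (c0 + c1*\<epsilon>)*x*y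
               + d*x*t + e*y*t + f*t^2 - z*t = 0
          \<and> z^q*t + z*t^q - x^(q+1) - y^(q+1) = 0}"
    and rank2: "qrank (subGF q) (Xi_inf \<nu> a0 a1 b0 b1 c0 c1) = 2"
  shows "two_planes_over (subGF q) (Xi_inf \<nu> a0 a1 b0 b1 c0 c1)"
proof -
  interpret Xi_inf_setting q h \<nu> \<epsilon> a0 a1 b0 b1 c0 c1
    by unfold_locales (use q_def h_pos card nu_GF eps_notin eps_eq coords in auto)
  define F where "F x y \<longleftrightarrow> Q x y = 0 \<and> x ^ (q + 1) + y ^ (q + 1) = 0" for x y
  have "(x,y,z,t) \<noteq> (0,0,0,0) \<and> t = 0
          \<and> (a0 + a1*\<epsilon>)*x^2 + (b0 + b1*\<epsilon>)*y^2 + (c0 + c1*\<epsilon>)*x*y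
               + d*x*t + e*y*t + f*t^2 - z*t = 0
          \<and> z^q*t + z*t^q - x^(q+1) - y^(q+1) = 0 \<longleftrightarrow>
        (x,y,z,t) \<noteq> (0,0,0,0) \<and> t = 0 \<and> F x y" for x y z t
    using q_pos unfolding F_def Q_def by (cases "t = 0") (simp_all add: zero_power diff_conv_add_uminus)
  with Cinf have "union_two_lines {(x, y, z, t). (x, y, z, t) \<noteq> (0, 0, 0, 0) \<and> t = 0 \<and> F x y}"
    by (simp only:)
  then obtain x1 y1 x2 y2 where "F x1 y1" "F x2 y2" "x1 * y2 - x2 * y1 \<noteq> 0"
    using union_two_lines_at_infinity_independent_points by blast
  then show ?thesis
    using two_planes_over_if_rank_2 rank2 unfolding F_def by blast
qed

end
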